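(* Let $f:\mathbb{R}^{n\times n}\to\mathbb{R}$ be differentiable and suppose there are constants $\underline{\nu}_f\le\overline{\nu}_f$ with $\frac{\underline{\nu}_f}{2}\|Y-X\|_{\mathsf F}^2\le f(Y)-f(X)-\langle\nabla f(X),Y-X\rangle\le\frac{\overline{\nu}_f}{2}\|Y-X\|_{\mathsf F}^2$ for all $X,Y\in\mathcal{D}_n$. Let $c_2>0$ satisfy $|f(X)-f(Y)|\ge c_2$ for all $X,Y\in\Pi_n$ with $f(X)\ne f(Y)$. Let $0<p<1$, $\epsilon\ge0$, $\overline{\nu}_h=p(1-p)(1+\epsilon)^{p-2}$, $K\ge1$, $\hat X_1,\dots,\hat X_K\in\mathcal{D}_n$, $\bar X=\frac1K\sum_{i=1}^K\hat X_i$. Suppose $0<\mu<\frac{c_2}{2n}$ and $\sigma>\max\{(\overline{\nu}_f-2\mu)/\overline{\nu}_h,0\}$. Then any global minimizer $\tilde X$ of \[ \min_{X\in\mathcal{D}_n}\ f(X)+\sigma\sum_{i,j=1}^n(X_{ij}+\epsilon)^p-\mu\|X-\bar X\|_{\mathsf F}^2 \] is a global minimizer of $\min_{X\in\Pi_n}f(X)$, and $\|\tilde X-\bar X\|_{\mathsf F}\ge\|X^*-\bar X\|_{\mathsf F}$ for every global minimizer $X^*$ of $\min_{X\in\Pi_n}f(X)$.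
   Context: $\Pi_n$ is the set of $n\times n$ permutation matrices and $\mathcal{D}_n=\{X\in\mathbb{R}^{n\times n}: X\mathbf{e}=X^{\mathsf T}\mathbf{e}=\mathbf{e},\ X\ge0\}$ the set of doubly stochastic matrices ($\mathbf e$ the all-ones vector); $\langle M,N\rangle=\mathrm{tr}(M^{\mathsf T}N)$, $\|\cdot\|_{\mathsf F}$ the Frobenius norm. *)

theory Defs
  imports "HOL-Analysis.Analysis"
begin

text \<open>n x n real matrices are rendered as real^'n^'n (n = CARD('n)).
  The inner product on this type is the Frobenius inner product tr(M^T N),
  and norm is the Frobenius norm.\<close>

definition doubly_stochastic :: "(real^'n^'n) set" where
  "doubly_stochastic = {X. (\<forall>i j. X $ i $ j \<ge> 0) \<and>
       (\<forall>i. (\<Sum>j\<in>UNIV. X $ i $ j) = 1) \<and> (\<forall>j. (\<Sum>i\<in>UNIV. X $ i $ j) = 1)}"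

definition perm_matrices :: "(real^'n^'n) set" where
  "perm_matrices = {X. \<exists>p. p permutes (UNIV :: 'n set) \<and>
       X = (\<chi> i j. if p i = j then 1 else 0)}"

end

theory Submission
  imports Defs
begin

text \<open>A minimizer \<open>X\<close> of the penalized problem is a vertex of the Birkhoff polytope.
  Otherwise its fractional entries contain a closed alternating row/column walk, whose signed
  incidence matrix \<open>D\<close> has zero row and column sums, so \<open>X + E\<close> and \<open>X - E\<close> stay doubly
  stochastic for \<open>E = \<tau> D\<close> with small \<open>\<tau> > 0\<close>. Along this segment the objective is strictly
  concave: the second difference of \<open>f\<close> is at most \<open>nu_hi \<parallel>E\<parallel>\<^sup>2\<close>, that of the penalty
  \<open>\<Sum> (x + eps) powr p\<close> at most \<open>-\<nu> \<parallel>E\<parallel>\<^sup>2\<close> (the second derivative of \<open>(u + eps) powr p\<close>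
  is at most \<open>-\<nu> = -p (1 - p) (1 + eps) powr (p - 2)\<close> on \<open>[0, 1]\<close>), and that of
  \<open>-mu \<parallel>X - Xbar\<parallel>\<^sup>2\<close> is exactly \<open>-2 mu \<parallel>E\<parallel>\<^sup>2\<close>. The choice of \<open>sigma\<close> makes the sum negative,
  so \<open>X + E\<close> or \<open>X - E\<close> would be better.

  On permutation matrices the penalty is constant and \<open>\<parallel>P - Xbar\<parallel>\<^sup>2\<close> varies by at most
  \<open>2n\<close>, so the distance term moves the objective by less than the gap \<open>c2\<close> of \<open>f\<close>: hence \<open>X\<close>
  minimizes \<open>f\<close>, and among the minimizers of \<open>f\<close> it is farthest from \<open>Xbar\<close>.\<close>

lemma shifted_powr_deriv_decrease:
  fixes e p a b :: real
  assumes e: "e \<ge> 0" and p: "0 < p" "p < 1" and ab: "0 < a" "a \<le> b" "b \<le> 1"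
  shows "p * (b + e) powr (p - 1) - p * (a + e) powr (p - 1)
           \<le> - (p * (1 - p) * (1 + e) powr (p - 2)) * (b - a)"
proof -
  define \<nu> where "\<nu> = p * (1 - p) * (1 + e) powr (p - 2)"
  define g where "g u = p * (u + e) powr (p - 1) + \<nu> * u" for u
  have deriv: "(g has_real_derivative p * ((p - 1) * (u + e) powr (p - 2)) + \<nu>) (at u)"
    if "u > 0" for u
    unfolding g_def using that e by (auto intro!: derivative_eq_intros)
  have "g b \<le> g a"
  proof (rule DERIV_nonpos_imp_decreasing_open[OF ab(2)])
    fix x assume x: "a < x" "x < b"
    have "(1 + e) powr (p - 2) \<le> (x + e) powr (p - 2)"
      by (rule powr_mono2') (use x ab e p in auto)
    then have "0 \<le> p * (1 - p) * ((x + e) powr (p - 2) - (1 + e) powr (p - 2))"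
      using p by simp
    then have "p * ((p - 1) * (x + e) powr (p - 2)) + \<nu> \<le> 0"
      unfolding \<nu>_def by (simp add: algebra_simps)
    then show "\<exists>y. (g has_real_derivative y) (at x) \<and> y \<le> 0"
      using deriv[of x] x ab by auto
  next
    show "continuous_on {a..b} g"
      by (rule DERIV_continuous_on[of _ _ "\<lambda>u. p * ((p - 1) * (u + e) powr (p - 2)) + \<nu>"])
        (use deriv ab in \<open>auto intro: has_field_derivative_at_within\<close>)
  qed
  then show ?thesis unfolding g_def \<nu>_def by (simp add: algebra_simps)
qed

lemma shifted_powr_second_difference:
  fixes e p x d :: real
  assumes e: "e \<ge> 0" and p: "0 < p" "p < 1"
    and d: "0 \<le> x - d" "x + d \<le> 1" "0 \<le> x + d" "x - d \<le> 1"
  shows "(x + d + e) powr p + (x - d + e) powr p - 2 * (x + e) powr p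
           \<le> - (p * (1 - p) * (1 + e) powr (p - 2)) * d\<^sup>2"
proof -
  define \<nu> where "\<nu> = p * (1 - p) * (1 + e) powr (p - 2)"
  define \<psi> where "\<psi> s = (x + s + e) powr p + (x - s + e) powr p - 2 * (x + e) powr p + \<nu> * s\<^sup>2"
    for s
  have "\<psi> d \<le> 0" if "0 \<le> d" "0 \<le> x - d" "x + d \<le> 1" for d
  proof -
    have "\<psi> d \<le> \<psi> 0"
    proof (rule DERIV_nonpos_imp_decreasing_open[OF \<open>0 \<le> d\<close>])
      fix s assume s: "0 < s" "s < d"
      have "(\<psi> has_real_derivative
              p * (x + s + e) powr (p - 1) - p * (x - s + e) powr (p - 1) + \<nu> * (2 * s)) (at s)"
        unfolding \<psi>_def using s that e by (auto intro!: derivative_eq_intros)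
      moreover have "p * (x + s + e) powr (p - 1) - p * (x - s + e) powr (p - 1)
                       \<le> - \<nu> * ((x + s) - (x - s))"
        unfolding \<nu>_def by (rule shifted_powr_deriv_decrease) (use e p s that in auto)
      ultimately show "\<exists>y. (\<psi> has_real_derivative y) (at s) \<and> y \<le> 0"
        by (auto simp: algebra_simps)
    next
      show "continuous_on {0..d} \<psi>"
        unfolding \<psi>_def using that e p by (intro continuous_intros continuous_on_powr') auto
    qed
    then show ?thesis by (simp add: \<psi>_def)
  qed
  moreover have "\<psi> (- s) = \<psi> s" for s
    unfolding \<psi>_def by (simp add: add_ac)
  ultimately have "\<psi> d \<le> 0"
    using d by (metis add_uminus_conv_diff diff_minus_eq_add linorder_le_cases neg_0_le_iff_le)
  then show ?thesis unfolding \<psi>_def \<nu>_def by (simp add: algebra_simps)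
qed

lemma norm_sq_second_difference:
  fixes X E Y :: "'a::real_inner"
  shows "(norm (X + E - Y))\<^sup>2 + (norm (X - E - Y))\<^sup>2 - 2 * (norm (X - Y))\<^sup>2 = 2 * (norm E)\<^sup>2"
  by (simp add: power2_norm_eq_inner algebra_simps inner_commute)

lemma smooth_second_difference_le:
  fixes f :: "'a::real_inner \<Rightarrow> real"
  assumes smooth: "\<forall>X\<in>S. \<forall>Y\<in>S. f Y - f X - g X \<bullet> (Y - X) \<le> L / 2 * (norm (Y - X))\<^sup>2"
    and "X \<in> S" "X + E \<in> S" "X - E \<in> S"
  shows "f (X + E) + f (X - E) - 2 * f X \<le> L * (norm E)\<^sup>2"
proof -
  have "f (X + E) - f X - g X \<bullet> ((X + E) - X) \<le> L / 2 * (norm ((X + E) - X))\<^sup>2"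
    "f (X - E) - f X - g X \<bullet> ((X - E) - X) \<le> L / 2 * (norm ((X - E) - X))\<^sup>2"
    using smooth assms(2-4) by blast+
  then have "f (X + E) - f X - g X \<bullet> E \<le> L / 2 * (norm E)\<^sup>2"
    "f (X - E) - f X + g X \<bullet> E \<le> L / 2 * (norm E)\<^sup>2"
    by simp_all
  then show ?thesis by simp
qed

lemma doubly_stochastic_nonneg: "X \<in> doubly_stochastic \<Longrightarrow> 0 \<le> X $ i $ j"
  unfolding doubly_stochastic_def by auto

lemma doubly_stochastic_row_sum: "X \<in> doubly_stochastic \<Longrightarrow> (\<Sum>j\<in>UNIV. X $ i $ j) = 1"
  unfolding doubly_stochastic_def by auto

lemma doubly_stochastic_col_sum: "X \<in> doubly_stochastic \<Longrightarrow> (\<Sum>i\<in>UNIV. X $ i $ j) = 1"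
  unfolding doubly_stochastic_def by auto

lemma doubly_stochastic_le_1:
  assumes "X \<in> doubly_stochastic"
  shows "X $ i $ j \<le> 1"
proof -
  have "X $ i $ j \<le> (\<Sum>j\<in>UNIV. X $ i $ j)"
    by (rule member_le_sum) (use doubly_stochastic_nonneg[OF assms] in auto)
  then show ?thesis using doubly_stochastic_row_sum[OF assms] by simp
qed

lemma doubly_stochastic_mean:
  assumes "finite S" "S \<noteq> {}" "\<And>k. k \<in> S \<Longrightarrow> A k \<in> doubly_stochastic"
  shows "(1 / real (card S)) *\<^sub>R (\<Sum>k\<in>S. A k) \<in> doubly_stochastic"
proof -
  have "card S > 0" using assms by auto
  have "(\<Sum>j\<in>UNIV. \<Sum>k\<in>S. A k $ i $ j) = card S" for i
    using assms(3) by (subst sum.swap) (simp add: doubly_stochastic_row_sum)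
  moreover have "(\<Sum>i\<in>UNIV. \<Sum>k\<in>S. A k $ i $ j) = card S" for j
    using assms(3) by (subst sum.swap) (simp add: doubly_stochastic_col_sum)
  moreover have "0 \<le> (\<Sum>k\<in>S. A k $ i $ j)" for i j
    using assms(3) by (simp add: sum_nonneg doubly_stochastic_nonneg)
  ultimately show ?thesis
    using \<open>card S > 0\<close> by (simp add: doubly_stochastic_def sum_divide_distrib[symmetric])
qed

definition fractional :: "real^'n^'n \<Rightarrow> 'n \<Rightarrow> 'n \<Rightarrow> bool" where
  "fractional X i j \<longleftrightarrow> 0 < X $ i $ j \<and> X $ i $ j < 1"

lemma add_le_sum_UNIV:
  fixes g :: "'a::finite \<Rightarrow> real"
  assumes "\<And>k. 0 \<le> g k" "a \<noteq> b"
  shows "g a + g b \<le> sum g UNIV"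
proof -
  have "sum g {a, b} \<le> sum g UNIV" by (rule sum_mono2) (use assms in auto)
  then show ?thesis using assms by simp
qed

lemma fractional_summand_not_unique:
  fixes g :: "'a::finite \<Rightarrow> real"
  assumes nonneg: "\<And>k. 0 \<le> g k" and sum: "sum g UNIV = 1" and frac: "0 < g j" "g j < 1"
  shows "\<exists>j'. j' \<noteq> j \<and> 0 < g j' \<and> g j' < 1"
proof (rule ccontr)
  assume "\<not> ?thesis"
  then have other: "g j' = 0 \<or> 1 \<le> g j'" if "j' \<noteq> j" for j'
    using nonneg[of j'] that by force
  have split: "sum g UNIV = g j + sum g (UNIV - {j})"
    by (simp add: sum.remove)
  show False
  proof (cases "\<exists>j'. j' \<noteq> j \<and> 1 \<le> g j'")
    case True
    then obtain j' where "j' \<noteq> j" "1 \<le> g j'" by auto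
    with add_le_sum_UNIV[of g j j'] nonneg sum frac show False by auto
  next
    case False
    then have "sum g (UNIV - {j}) = 0" using other by (intro sum.neutral) force
    then show False using split sum frac by linarith
  qed
qed

lemma fractional_in_row:
  "X \<in> doubly_stochastic \<Longrightarrow> fractional X i j \<Longrightarrow> \<exists>j'. j' \<noteq> j \<and> fractional X i j'"
  unfolding fractional_def
  by (rule fractional_summand_not_unique[of "\<lambda>j. X $ i $ j"])
    (auto simp: doubly_stochastic_nonneg doubly_stochastic_row_sum)

lemma fractional_in_col:
  "X \<in> doubly_stochastic \<Longrightarrow> fractional X i j \<Longrightarrow> \<exists>i'. i' \<noteq> i \<and> fractional X i' j"
  unfolding fractional_def
  by (rule fractional_summand_not_unique[of "\<lambda>i. X $ i $ j"])
    (auto simp: doubly_stochastic_nonneg doubly_stochastic_col_sum)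

lemma doubly_stochastic_0_1_in_perm_matrices:
  assumes X: "X \<in> doubly_stochastic" and zero_one: "\<And>i j. X $ i $ j = 0 \<or> X $ i $ j = 1"
  shows "X \<in> perm_matrices"
proof -
  have unique: "j = j'" if "X $ i $ j = 1" "X $ i $ j' = 1" for i j j'
    using add_le_sum_UNIV[of "\<lambda>j. X $ i $ j" j j'] that
      doubly_stochastic_nonneg[OF X] doubly_stochastic_row_sum[OF X, of i] by force
  have "\<exists>j. X $ i $ j = 1" for i
  proof (rule ccontr)
    assume "\<nexists>j. X $ i $ j = 1"
    then have "(\<Sum>j\<in>UNIV. X $ i $ j) = 0" using zero_one by (intro sum.neutral) auto
    then show False using doubly_stochastic_row_sum[OF X, of i] by simp
  qed
  then obtain p where p: "\<And>i. X $ i $ p i = 1" by metis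
  have entries: "X $ i $ j = (if p i = j then 1 else 0)" for i j
    using zero_one[of i j] unique[of i j "p i"] p[of i] by auto
  have "inj p"
  proof (rule injI)
    fix i i' assume same: "p i = p i'"
    show "i = i'"
    proof (rule ccontr)
      assume "i \<noteq> i'"
      with add_le_sum_UNIV[of "\<lambda>k. X $ k $ p i'" i i'] doubly_stochastic_nonneg[OF X]
        doubly_stochastic_col_sum[OF X, of "p i'"] p[of i] p[of i'] same
      show False by auto
    qed
  qed
  then have "bij p"
    using finite_UNIV_inj_surj[of p] by (simp add: bij_def)
  then have "p permutes UNIV"
    by (intro bij_imp_permutes) auto
  moreover have "X = (\<chi> i j. if p i = j then 1 else 0)"
    by (simp add: vec_eq_iff entries)
  ultimately show ?thesis unfolding perm_matrices_def by blast
qed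

lemma doubly_stochastic_not_perm_fractional:
  assumes X: "X \<in> doubly_stochastic" and "X \<notin> perm_matrices"
  obtains i j where "fractional X i j"
proof -
  obtain i j where "X $ i $ j \<noteq> 0" "X $ i $ j \<noteq> 1"
    using doubly_stochastic_0_1_in_perm_matrices[OF X] assms(2) by blast
  then have "fractional X i j"
    using doubly_stochastic_nonneg[OF X, of i j] doubly_stochastic_le_1[OF X, of i j]
    unfolding fractional_def by linarith
  then show ?thesis by (rule that)
qed

lemma fractional_walk:
  assumes X: "X \<in> doubly_stochastic" and "fractional X i0 j0"
  obtains I J :: "nat \<Rightarrow> 'n::finite"
  where "\<And>t. fractional X (I t) (J (Suc t))" "\<And>t. fractional X (I (Suc t)) (J (Suc t))"
    "\<And>t. I (Suc t) \<noteq> I t" "\<And>t. J (Suc t) \<noteq> J t"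
proof -
  define nj where "nj i j = (SOME j'. j' \<noteq> j \<and> fractional X i j')" for i j
  define ni where "ni i j = (SOME i'. i' \<noteq> i \<and> fractional X i' j)" for i j
  have nj: "nj i j \<noteq> j \<and> fractional X i (nj i j)" if "fractional X i j" for i j
    unfolding nj_def by (rule someI_ex) (rule fractional_in_row[OF X that])
  have ni: "ni i j \<noteq> i \<and> fractional X (ni i j) j" if "fractional X i j" for i j
    unfolding ni_def by (rule someI_ex) (rule fractional_in_col[OF X that])
  define step where "step = (\<lambda>(i, j). (ni i (nj i j), nj i j))"
  define I where "I t = fst ((step ^^ t) (i0, j0))" for t
  define J where "J t = snd ((step ^^ t) (i0, j0))" for t
  have IJ_Suc: "J (Suc t) = nj (I t) (J t)" "I (Suc t) = ni (I t) (J (Suc t))" for t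
    unfolding I_def J_def step_def by (simp_all add: case_prod_beta)
  have frac: "fractional X (I t) (J t)" for t
  proof (induction t)
    case 0
    then show ?case using assms(2) by (simp add: I_def J_def)
  next
    case (Suc t)
    then show ?case using ni nj by (simp add: IJ_Suc)
  qed
  show ?thesis
    by (rule that[of I J]) (use frac ni nj in \<open>simp_all add: IJ_Suc\<close>)
qed

lemma exists_first_repetition:
  fixes I :: "nat \<Rightarrow> 'a::finite"
  obtains a b where "a < b" "I a = I b" "inj_on I {a..<b}"
proof -
  have "\<not> inj I"
    using finite_imageD[of I UNIV] by auto
  then have "\<exists>b a. a < b \<and> I a = I b"
    unfolding inj_def by (metis linorder_neqE_nat)
  define b where "b = (LEAST b. \<exists>a<b. I a = I b)"
  obtain a where ab: "a < b" "I a = I b"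
    using LeastI_ex[of "\<lambda>b. \<exists>a<b. I a = I b"] \<open>\<exists>b a. a < b \<and> I a = I b\<close>
    unfolding b_def by blast
  have "I s \<noteq> I t" if "s < t" "t < b" for s t
    using Least_le[of "\<lambda>b. \<exists>a<b. I a = I b" t] that unfolding b_def by fastforce
  then have "inj_on I {a..<b}"
    by (intro inj_onI) (metis atLeastLessThan_iff linorder_neqE_nat)
  with ab that show ?thesis by blast
qed

text \<open>Signed incidence matrix of the alternating walk \<open>(I t, J (t+1)) \<rightarrow> (I (t+1), J (t+1))\<close>,
  \<open>a \<le> t < b\<close>: each step contributes \<open>+1\<close> and \<open>-1\<close> to the same column, and the row
  contributions telescope once the walk closes up (\<open>I b = I a\<close>).\<close>

definition cycle_matrix :: "(nat \<Rightarrow> 'n) \<Rightarrow> (nat \<Rightarrow> 'n) \<Rightarrow> nat \<Rightarrow> nat \<Rightarrow> real^'n^'n" where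
  "cycle_matrix I J a b = (\<chi> k l. \<Sum>t\<in>{a..<b}.
      of_bool (I t = k \<and> J (Suc t) = l) - of_bool (I (Suc t) = k \<and> J (Suc t) = l))"

lemma sum_UNIV_of_bool_conj_eq:
  fixes c :: "'a::finite"
  shows "(\<Sum>k\<in>UNIV. of_bool (P \<and> c = k)) = (of_bool P :: real)"
    and "(\<Sum>k\<in>UNIV. of_bool (c = k \<and> P)) = (of_bool P :: real)"
  by (cases P; simp)+

lemma cycle_matrix_row_sum:
  assumes "a \<le> b" "I a = I b"
  shows "(\<Sum>l\<in>UNIV. cycle_matrix I J a b $ k $ l) = 0"
proof -
  have "(\<Sum>l\<in>UNIV. cycle_matrix I J a b $ k $ l)
      = (\<Sum>t\<in>{a..<b}. \<Sum>l\<in>UNIV. of_bool (I t = k \<and> J (Suc t) = l)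
                                   - of_bool (I (Suc t) = k \<and> J (Suc t) = l))"
    unfolding cycle_matrix_def vec_lambda_beta by (rule sum.swap)
  also have "\<dots> = (\<Sum>t\<in>{a..<b}. of_bool (I t = k) - of_bool (I (Suc t) = k))"
    by (simp only: sum_subtractf sum_UNIV_of_bool_conj_eq)
  also have "\<dots> = - (\<Sum>t\<in>{a..<b}. of_bool (I (Suc t) = k) - of_bool (I t = k))"
    by (simp only: sum_negf[symmetric] minus_diff_eq)
  also have "\<dots> = 0"
    using sum_Suc_diff'[OF assms(1), of "\<lambda>t. of_bool (I t = k) :: real"] assms(2) by simp
  finally show ?thesis .
qed

lemma cycle_matrix_col_sum: "(\<Sum>k\<in>UNIV. cycle_matrix I J a b $ k $ l) = 0"
proof -
  have "(\<Sum>k\<in>UNIV. cycle_matrix I J a b $ k $ l)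
      = (\<Sum>t\<in>{a..<b}. \<Sum>k\<in>UNIV. of_bool (I t = k \<and> J (Suc t) = l)
                                   - of_bool (I (Suc t) = k \<and> J (Suc t) = l))"
    unfolding cycle_matrix_def vec_lambda_beta by (rule sum.swap)
  also have "\<dots> = 0"
    by (simp only: sum_subtractf sum_UNIV_of_bool_conj_eq)
  finally show ?thesis .
qed

lemma cycle_matrix_nonzero_entry:
  assumes "cycle_matrix I J a b $ k $ l \<noteq> 0"
  shows "\<exists>t. (k = I t \<or> k = I (Suc t)) \<and> l = J (Suc t)"
proof (rule ccontr)
  assume "\<not> ?thesis"
  then have "cycle_matrix I J a b $ k $ l = 0"
    unfolding cycle_matrix_def by (auto intro!: sum.neutral)
  with assms show False by simp
qed

lemma cycle_matrix_nonzero: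
  assumes ab: "a < b" "I a = I b" "inj_on I {a..<b}"
    and steps: "\<And>t. I (Suc t) \<noteq> I t" "\<And>t. J (Suc t) \<noteq> J t"
  shows "cycle_matrix I J a b \<noteq> 0"
proof -
  have "Suc a < b"
    using ab steps(1)[of a] by (metis Suc_lessI)
  have I_Suc_a: "I t \<noteq> I (Suc a)" if "t \<in> {a..<b}" "t \<noteq> Suc a" for t
    using inj_onD[OF ab(3), of t "Suc a"] that \<open>Suc a < b\<close> steps(1)[of a] by fastforce
  have "(\<Sum>t\<in>{a..<b}. of_bool (I t = I (Suc a) \<and> J (Suc t) = J (Suc a)) :: real) = 0"
    using I_Suc_a steps(2)[of "Suc a"] by (intro sum.neutral ballI) auto
  moreover have "(\<Sum>t\<in>{a..<b}. of_bool (I (Suc t) = I (Suc a) \<and> J (Suc t) = J (Suc a)) :: real)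
      = (\<Sum>t\<in>{a..<b}. of_bool (t = a))"
  proof (intro sum.cong refl)
    fix t assume "t \<in> {a..<b}"
    then have "I (Suc t) \<noteq> I (Suc a)" if "t \<noteq> a"
      using I_Suc_a[of "Suc t"] ab(2) steps(1)[of a] that by (cases "Suc t = b") auto
    then show "of_bool (I (Suc t) = I (Suc a) \<and> J (Suc t) = J (Suc a)) = (of_bool (t = a) :: real)"
      by auto
  qed
  ultimately have "cycle_matrix I J a b $ I (Suc a) $ J (Suc a) = -1"
    using ab(1) by (simp add: cycle_matrix_def sum_subtractf)
  then show ?thesis by auto
qed

lemma doubly_stochastic_balanced_direction:
  assumes X: "X \<in> doubly_stochastic" and "fractional X i0 j0"
  obtains D :: "real^'n::finite^'n"
  where "D \<noteq> 0" "\<And>i. (\<Sum>j\<in>UNIV. D $ i $ j) = 0" "\<And>j. (\<Sum>i\<in>UNIV. D $ i $ j) = 0"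
    "\<And>i j. D $ i $ j \<noteq> 0 \<Longrightarrow> 0 < X $ i $ j"
proof -
  obtain I J :: "nat \<Rightarrow> 'n" where walk:
    "\<And>t. fractional X (I t) (J (Suc t))" "\<And>t. fractional X (I (Suc t)) (J (Suc t))"
    "\<And>t. I (Suc t) \<noteq> I t" "\<And>t. J (Suc t) \<noteq> J t"
    using fractional_walk[OF assms] by blast
  obtain a b where ab: "a < b" "I a = I b" "inj_on I {a..<b}"
    using exists_first_repetition by blast
  have "0 < X $ i $ j" if "cycle_matrix I J a b $ i $ j \<noteq> 0" for i j
    using cycle_matrix_nonzero_entry[OF that] walk(1,2) unfolding fractional_def by blast
  with ab walk(3,4) show ?thesis
    by (intro that[of "cycle_matrix I J a b"] cycle_matrix_nonzero cycle_matrix_row_sum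
        cycle_matrix_col_sum) auto
qed

lemma doubly_stochastic_two_sided_step:
  fixes X D :: "real^'n^'n"
  assumes X: "X \<in> doubly_stochastic"
    and rows: "\<And>i. (\<Sum>j\<in>UNIV. D $ i $ j) = 0" and cols: "\<And>j. (\<Sum>i\<in>UNIV. D $ i $ j) = 0"
    and supp: "\<And>i j. D $ i $ j \<noteq> 0 \<Longrightarrow> 0 < X $ i $ j"
  obtains \<tau> where "0 < \<tau>" "X + \<tau> *\<^sub>R D \<in> doubly_stochastic" "X - \<tau> *\<^sub>R D \<in> doubly_stochastic"
proof -
  have small: "\<forall>\<^sub>F \<tau> in at_right 0. \<tau> * \<bar>D $ i $ j\<bar> \<le> X $ i $ j" for i j
  proof (cases "D $ i $ j = 0")
    case True
    then show ?thesis using doubly_stochastic_nonneg[OF X] by simp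
  next
    case False
    have "((\<lambda>\<tau>. \<tau> * \<bar>D $ i $ j\<bar>) \<longlongrightarrow> 0 * \<bar>D $ i $ j\<bar>) (at_right 0)"
      by (intro tendsto_intros)
    then have "\<forall>\<^sub>F \<tau> in at_right 0. \<tau> * \<bar>D $ i $ j\<bar> < X $ i $ j"
      using supp[OF False] by (intro order_tendstoD(2)) auto
    then show ?thesis by eventually_elim simp
  qed
  have "\<forall>\<^sub>F \<tau> in at_right 0. \<forall>i j. \<tau> * \<bar>D $ i $ j\<bar> \<le> X $ i $ j"
    by (intro eventually_all_finite small)
  moreover have "\<forall>\<^sub>F \<tau> in at_right (0::real). 0 < \<tau>"
    by (rule eventually_at_right_less)
  ultimately have "\<forall>\<^sub>F \<tau> in at_right (0::real). 0 < \<tau> \<and> (\<forall>i j. \<tau> * \<bar>D $ i $ j\<bar> \<le> X $ i $ j)"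
    by eventually_elim blast
  then obtain \<tau> where \<tau>: "0 < \<tau>" "\<And>i j. \<tau> * \<bar>D $ i $ j\<bar> \<le> X $ i $ j"
    using eventually_happens'[OF trivial_limit_at_right_real] by blast
  have abs_le: "\<bar>\<tau> * D $ i $ j\<bar> \<le> X $ i $ j" for i j
    using \<tau> by (simp add: abs_mult)
  have nonneg: "0 \<le> X $ i $ j + \<tau> * D $ i $ j" "0 \<le> X $ i $ j + (- \<tau>) * D $ i $ j" for i j
    using abs_le[of i j] by (simp_all add: abs_le_iff)
  have member: "X + c *\<^sub>R D \<in> doubly_stochastic" if "\<And>i j. 0 \<le> X $ i $ j + c * D $ i $ j" for c
    using that doubly_stochastic_row_sum[OF X] doubly_stochastic_col_sum[OF X] rows cols
    unfolding doubly_stochastic_def by (simp add: sum.distrib sum_distrib_left[symmetric])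
  have "X + \<tau> *\<^sub>R D \<in> doubly_stochastic" "X + (- \<tau>) *\<^sub>R D \<in> doubly_stochastic"
    using member nonneg by blast+
  with \<tau>(1) that show ?thesis by simp
qed

lemma doubly_stochastic_not_perm_segment:
  assumes X: "X \<in> doubly_stochastic" and "X \<notin> perm_matrices"
  obtains E where "E \<noteq> 0" "X + E \<in> doubly_stochastic" "X - E \<in> doubly_stochastic"
proof -
  obtain i0 j0 where "fractional X i0 j0"
    using doubly_stochastic_not_perm_fractional[OF assms] .
  obtain D :: "real^_^_" where D: "D \<noteq> 0" "\<And>i. (\<Sum>j\<in>UNIV. D $ i $ j) = 0"
      "\<And>j. (\<Sum>i\<in>UNIV. D $ i $ j) = 0" "\<And>i j. D $ i $ j \<noteq> 0 \<Longrightarrow> 0 < X $ i $ j"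
    using doubly_stochastic_balanced_direction[OF X \<open>fractional X i0 j0\<close>] by blast
  obtain \<tau> where "0 < \<tau>" "X + \<tau> *\<^sub>R D \<in> doubly_stochastic" "X - \<tau> *\<^sub>R D \<in> doubly_stochastic"
    by (rule doubly_stochastic_two_sided_step[OF X D(2-4)])
  with D(1) that[of "\<tau> *\<^sub>R D"] show ?thesis by simp
qed

lemma minimizer_on_doubly_stochastic_in_perm_matrices:
  fixes F :: "real^'n::finite^'n \<Rightarrow> real"
  assumes "X \<in> doubly_stochastic" and min: "\<And>Y. Y \<in> doubly_stochastic \<Longrightarrow> F X \<le> F Y"
    and concave: "\<And>E. E \<noteq> 0 \<Longrightarrow> X + E \<in> doubly_stochastic \<Longrightarrow> X - E \<in> doubly_stochastic
                     \<Longrightarrow> F (X + E) + F (X - E) < 2 * F X"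
  shows "X \<in> perm_matrices"
proof (rule ccontr)
  assume "X \<notin> perm_matrices"
  then obtain E where "E \<noteq> 0" "X + E \<in> doubly_stochastic" "X - E \<in> doubly_stochastic"
    using doubly_stochastic_not_perm_segment[OF assms(1)] by blast
  then have "F (X + E) + F (X - E) < 2 * F X"
    by (rule concave)
  moreover have "F X \<le> F (X + E)" "F X \<le> F (X - E)"
    using min \<open>X + E \<in> doubly_stochastic\<close> \<open>X - E \<in> doubly_stochastic\<close> by auto
  ultimately show False by linarith
qed

lemma norm_sq_matrix_eq_sum: "(norm (D::real^'n^'m))\<^sup>2 = (\<Sum>i\<in>UNIV. \<Sum>j\<in>UNIV. (D $ i $ j)\<^sup>2)"
  by (simp only: power2_norm_eq_inner) (simp add: inner_vec_def power2_eq_square)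

lemma perm_matricesE:
  assumes "P \<in> perm_matrices"
  obtains p where "p permutes (UNIV::'n::finite set)"
    "\<And>i j. (P::real^'n^'n) $ i $ j = of_bool (p i = j)"
  using assms unfolding perm_matrices_def by auto

lemma perm_matrix_doubly_stochastic:
  assumes "P \<in> perm_matrices"
  shows "P \<in> doubly_stochastic"
proof -
  obtain p where p: "p permutes UNIV" and P: "\<And>i j. P $ i $ j = of_bool (p i = j)"
    using perm_matricesE[OF assms] by blast
  have "(\<Sum>i\<in>UNIV. P $ i $ j) = (\<Sum>i\<in>UNIV. of_bool (inv p j = i))" for j
    unfolding P using permutes_inv_eq[OF p] by (intro sum.cong) auto
  then show ?thesis unfolding doubly_stochastic_def by (auto simp: P)
qed

lemma sum_entries_perm_matrix:
  fixes g :: "real \<Rightarrow> real"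
  assumes "P \<in> perm_matrices"
  shows "(\<Sum>i\<in>UNIV. \<Sum>j\<in>UNIV. g ((P::real^'n::finite^'n) $ i $ j))
           = real CARD('n) * (real CARD('n) * g 0 + (g 1 - g 0))"
proof -
  obtain p where P: "\<And>i j. P $ i $ j = of_bool (p i = j)"
    using perm_matricesE[OF assms] by blast
  have "g (P $ i $ j) = g 0 + of_bool (p i = j) * (g 1 - g 0)" for i j
    by (simp add: P)
  then show ?thesis by (simp add: sum.distrib)
qed

lemma perm_matrix_inner_bounds:
  fixes P Y :: "real^'n::finite^'n"
  assumes "P \<in> perm_matrices" "Y \<in> doubly_stochastic"
  shows "0 \<le> P \<bullet> Y" "P \<bullet> Y \<le> real CARD('n)"
proof -
  obtain p where P: "\<And>i j. P $ i $ j = of_bool (p i = j)"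
    using perm_matricesE[OF assms(1)] by blast
  have "P \<bullet> Y = (\<Sum>i\<in>UNIV. Y $ i $ p i)"
    by (simp add: inner_vec_def P if_distrib)
  moreover have "(\<Sum>i\<in>UNIV. Y $ i $ p i) \<le> (\<Sum>i\<in>(UNIV::'n set). 1)"
    by (intro sum_mono doubly_stochastic_le_1[OF assms(2)])
  ultimately show "0 \<le> P \<bullet> Y" "P \<bullet> Y \<le> real CARD('n)"
    by (simp_all add: sum_nonneg doubly_stochastic_nonneg[OF assms(2)])
qed

lemma perm_matrix_dist_sq_diff_le:
  fixes P Q Y :: "real^'n::finite^'n"
  assumes "P \<in> perm_matrices" "Q \<in> perm_matrices" "Y \<in> doubly_stochastic"
  shows "(norm (P - Y))\<^sup>2 - (norm (Q - Y))\<^sup>2 \<le> 2 * real CARD('n)"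
proof -
  have "(norm (R - Y))\<^sup>2 = real CARD('n) - 2 * (R \<bullet> Y) + (norm Y)\<^sup>2"
    if "R \<in> perm_matrices" for R :: "real^'n^'n"
  proof -
    have "(norm R)\<^sup>2 = real CARD('n)"
      using sum_entries_perm_matrix[OF that, of "\<lambda>x. x\<^sup>2"] by (simp add: norm_sq_matrix_eq_sum)
    then show ?thesis
      by (simp add: power2_norm_eq_inner inner_diff_left inner_diff_right inner_commute)
  qed
  with perm_matrix_inner_bounds[OF assms(1,3)] perm_matrix_inner_bounds[OF assms(2,3)] assms(1,2)
  show ?thesis by simp
qed

definition power_penalty :: "real \<Rightarrow> real \<Rightarrow> real^'n^'n \<Rightarrow> real" where
  "power_penalty e p X = (\<Sum>i\<in>UNIV. \<Sum>j\<in>UNIV. (X $ i $ j + e) powr p)"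

lemma power_penalty_second_difference:
  fixes X E :: "real^'n::finite^'n"
  assumes "e \<ge> 0" "0 < p" "p < 1"
    and DS: "X + E \<in> doubly_stochastic" "X - E \<in> doubly_stochastic"
  shows "power_penalty e p (X + E) + power_penalty e p (X - E) - 2 * power_penalty e p X
           \<le> - (p * (1 - p) * (1 + e) powr (p - 2)) * (norm E)\<^sup>2"
proof -
  let ?\<nu> = "p * (1 - p) * (1 + e) powr (p - 2)"
  have "(X $ i $ j + E $ i $ j + e) powr p + (X $ i $ j - E $ i $ j + e) powr p
          - 2 * (X $ i $ j + e) powr p \<le> - ?\<nu> * (E $ i $ j)\<^sup>2" for i j
    using doubly_stochastic_nonneg[OF DS(1), of i j] doubly_stochastic_le_1[OF DS(1), of i j]
      doubly_stochastic_nonneg[OF DS(2), of i j] doubly_stochastic_le_1[OF DS(2), of i j]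
    by (intro shifted_powr_second_difference) (simp_all add: assms(1-3))
  then have "(\<Sum>i\<in>UNIV. \<Sum>j\<in>UNIV. (X $ i $ j + E $ i $ j + e) powr p
          + (X $ i $ j - E $ i $ j + e) powr p - 2 * (X $ i $ j + e) powr p)
        \<le> (\<Sum>i\<in>UNIV. \<Sum>j\<in>UNIV. - ?\<nu> * (E $ i $ j)\<^sup>2)"
    by (intro sum_mono)
  then show ?thesis
    unfolding power_penalty_def norm_sq_matrix_eq_sum
    by (simp add: sum.distrib sum_subtractf sum_distrib_left)
qed

lemma power_penalty_perm_matrix_eq:
  fixes P Q :: "real^'n::finite^'n"
  assumes "P \<in> perm_matrices" "Q \<in> perm_matrices"
  shows "power_penalty e p P = power_penalty e p Q"
  using sum_entries_perm_matrix[OF assms(1), of "\<lambda>x. (x + e) powr p"]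
    sum_entries_perm_matrix[OF assms(2), of "\<lambda>x. (x + e) powr p"]
  unfolding power_penalty_def by simp

lemma penalized_minimizer_in_perm_matrices:
  fixes f :: "real^'n::finite^'n \<Rightarrow> real"
  assumes smooth: "\<forall>X\<in>doubly_stochastic. \<forall>Y\<in>doubly_stochastic.
        f Y - f X - g X \<bullet> (Y - X) \<le> L / 2 * (norm (Y - X))\<^sup>2"
    and e: "e \<ge> 0" and p: "0 < p" "p < 1" and \<sigma>: "0 \<le> \<sigma>"
    and \<sigma>_large: "L - 2 * \<mu> < \<sigma> * (p * (1 - p) * (1 + e) powr (p - 2))"
    and X: "X \<in> doubly_stochastic"
    and min: "\<And>Y. Y \<in> doubly_stochastic \<Longrightarrow>
        f X + \<sigma> * power_penalty e p X - \<mu> * (norm (X - Xbar))\<^sup>2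
        \<le> f Y + \<sigma> * power_penalty e p Y - \<mu> * (norm (Y - Xbar))\<^sup>2"
  shows "X \<in> perm_matrices"
proof (rule minimizer_on_doubly_stochastic_in_perm_matrices[OF X,
      where F = "\<lambda>Y. f Y + \<sigma> * power_penalty e p Y - \<mu> * (norm (Y - Xbar))\<^sup>2", OF min])
  fix E assume E: "E \<noteq> 0" "X + E \<in> doubly_stochastic" "X - E \<in> doubly_stochastic"
  define \<nu> where "\<nu> = p * (1 - p) * (1 + e) powr (p - 2)"
  define h :: "real^'n^'n \<Rightarrow> real" where "h = power_penalty e p"
  have "f (X + E) + f (X - E) - 2 * f X \<le> L * (norm E)\<^sup>2"
    by (rule smooth_second_difference_le[OF smooth X E(2,3)])
  moreover have "\<sigma> * (h (X + E) + h (X - E) - 2 * h X) \<le> \<sigma> * (- \<nu> * (norm E)\<^sup>2)"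
    unfolding h_def \<nu>_def
    by (intro mult_left_mono power_penalty_second_difference e p E(2,3) \<sigma>)
  moreover have "\<mu> * ((norm (X + E - Xbar))\<^sup>2 + (norm (X - E - Xbar))\<^sup>2 - 2 * (norm (X - Xbar))\<^sup>2)
      = \<mu> * (2 * (norm E)\<^sup>2)"
    by (simp only: norm_sq_second_difference)
  moreover have "(L - \<sigma> * \<nu> - 2 * \<mu>) * (norm E)\<^sup>2 < 0"
    using \<sigma>_large E(1) unfolding \<nu>_def by (intro mult_neg_pos) auto
  ultimately show "f (X + E) + \<sigma> * h (X + E) - \<mu> * (norm (X + E - Xbar))\<^sup>2
      + (f (X - E) + \<sigma> * h (X - E) - \<mu> * (norm (X - E - Xbar))\<^sup>2)
      < 2 * (f X + \<sigma> * h X - \<mu> * (norm (X - Xbar))\<^sup>2)"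
    by (simp add: algebra_simps)
qed

lemma perm_minimizer_of_distance_penalized:
  fixes f :: "real^'n::finite^'n \<Rightarrow> real"
  assumes gap: "\<forall>X\<in>perm_matrices. \<forall>Y\<in>perm_matrices. f X \<noteq> f Y \<longrightarrow> c \<le> \<bar>f X - f Y\<bar>"
    and \<mu>: "0 < \<mu>" "2 * real CARD('n) * \<mu> < c"
    and Xbar: "Xbar \<in> doubly_stochastic" and X: "X \<in> perm_matrices"
    and min: "\<And>Y. Y \<in> perm_matrices \<Longrightarrow>
        f X - \<mu> * (norm (X - Xbar))\<^sup>2 \<le> f Y - \<mu> * (norm (Y - Xbar))\<^sup>2"
  shows "(\<forall>Y\<in>perm_matrices. f X \<le> f Y)
    \<and> (\<forall>Xs\<in>perm_matrices. (\<forall>Y\<in>perm_matrices. f Xs \<le> f Y)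
          \<longrightarrow> norm (Xs - Xbar) \<le> norm (X - Xbar))"
proof (intro conjI ballI impI)
  show optimal: "f X \<le> f Y" if Y: "Y \<in> perm_matrices" for Y
  proof (rule ccontr)
    assume "\<not> f X \<le> f Y"
    then have "c \<le> f X - f Y" using gap X Y by fastforce
    moreover have "f X - f Y \<le> \<mu> * ((norm (X - Xbar))\<^sup>2 - (norm (Y - Xbar))\<^sup>2)"
      using min[OF Y] by (simp add: algebra_simps)
    moreover have "\<mu> * ((norm (X - Xbar))\<^sup>2 - (norm (Y - Xbar))\<^sup>2) \<le> \<mu> * (2 * real CARD('n))"
      using perm_matrix_dist_sq_diff_le[OF X Y Xbar] \<mu>(1) by (intro mult_left_mono) auto
    ultimately show False using \<mu>(2) by (simp add: algebra_simps)
  qed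
  fix Xs assume Xs: "Xs \<in> perm_matrices" "\<forall>Y\<in>perm_matrices. f Xs \<le> f Y"
  then have "f Xs = f X" using optimal X by (meson order_antisym)
  then have "(norm (Xs - Xbar))\<^sup>2 \<le> (norm (X - Xbar))\<^sup>2"
    using min[OF Xs(1)] \<mu>(1) by simp
  then show "norm (Xs - Xbar) \<le> norm (X - Xbar)"
    by (rule power2_le_imp_le) simp
qed

theorem theorem5p2:
  fixes f :: "real^'n^'n \<Rightarrow> real"
    and gradf :: "real^'n^'n \<Rightarrow> real^'n^'n"
    and nu_lo nu_hi c2 p eps mu sigma :: real
    and K :: nat
    and Xhat :: "nat \<Rightarrow> real^'n^'n"
    and Xbar Xt :: "real^'n^'n"
  assumes grad: "\<forall>X. (f has_derivative (\<lambda>H. gradf X \<bullet> H)) (at X)"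
    and nu_le: "nu_lo \<le> nu_hi"
    and strong: "\<forall>X\<in>doubly_stochastic. \<forall>Y\<in>doubly_stochastic.
        nu_lo / 2 * (norm (Y - X))\<^sup>2 \<le> f Y - f X - gradf X \<bullet> (Y - X) \<and>
        f Y - f X - gradf X \<bullet> (Y - X) \<le> nu_hi / 2 * (norm (Y - X))\<^sup>2"
    and c2_pos: "c2 > 0"
    and c2: "\<forall>X\<in>perm_matrices. \<forall>Y\<in>perm_matrices. f X \<noteq> f Y \<longrightarrow> \<bar>f X - f Y\<bar> \<ge> c2"
    and p: "0 < p" "p < 1"
    and eps: "eps \<ge> 0"
    and K: "K \<ge> 1"
    and Xhat: "\<forall>i\<in>{1..K}. Xhat i \<in> doubly_stochastic"
    and Xbar: "Xbar = (1 / real K) *\<^sub>R (\<Sum>i=1..K. Xhat i)"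
    and mu: "0 < mu" "mu < c2 / (2 * real CARD('n))"
    and sigma: "sigma > max ((nu_hi - 2 * mu) / (p * (1 - p) * (1 + eps) powr (p - 2))) 0"
    and Xt_mem: "Xt \<in> doubly_stochastic"
    and Xt_min: "\<forall>X\<in>doubly_stochastic.
        f Xt + sigma * (\<Sum>i\<in>UNIV. \<Sum>j\<in>UNIV. (Xt $ i $ j + eps) powr p) - mu * (norm (Xt - Xbar))\<^sup>2
        \<le> f X + sigma * (\<Sum>i\<in>UNIV. \<Sum>j\<in>UNIV. (X $ i $ j + eps) powr p) - mu * (norm (X - Xbar))\<^sup>2"
  shows "Xt \<in> perm_matrices \<and> (\<forall>Y\<in>perm_matrices. f Xt \<le> f Y) \<and>
         (\<forall>Xs\<in>perm_matrices. (\<forall>Y\<in>perm_matrices. f Xs \<le> f Y) \<longrightarrow>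
              norm (Xt - Xbar) \<ge> norm (Xs - Xbar))"
proof -
  let ?\<nu>h = "p * (1 - p) * (1 + eps) powr (p - 2)"
  have "0 < ?\<nu>h" using p eps by simp
  then have \<sigma>: "0 \<le> sigma" "nu_hi - 2 * mu < sigma * ?\<nu>h"
    using sigma by (simp_all add: pos_divide_less_eq)
  have Xbar_ds: "Xbar \<in> doubly_stochastic"
    using doubly_stochastic_mean[of "{1..K}" Xhat] Xhat K unfolding Xbar by simp
  have min: "f Xt + sigma * power_penalty eps p Xt - mu * (norm (Xt - Xbar))\<^sup>2
      \<le> f X + sigma * power_penalty eps p X - mu * (norm (X - Xbar))\<^sup>2"
    if "X \<in> doubly_stochastic" for X
    using Xt_min that unfolding power_penalty_def by blast
  have Xt_perm: "Xt \<in> perm_matrices"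
    using strong by (intro penalized_minimizer_in_perm_matrices[OF _ eps p \<sigma> Xt_mem min]) auto
  have "f Xt - mu * (norm (Xt - Xbar))\<^sup>2 \<le> f Y - mu * (norm (Y - Xbar))\<^sup>2"
    if "Y \<in> perm_matrices" for Y
    using min[OF perm_matrix_doubly_stochastic[OF that]]
      power_penalty_perm_matrix_eq[OF Xt_perm that] by simp
  moreover have "2 * real CARD('n) * mu < c2"
    using mu(2) by (simp add: less_divide_eq mult.commute)
  ultimately show ?thesis
    using perm_minimizer_of_distance_penalized[OF c2 mu(1) _ Xbar_ds Xt_perm] Xt_perm by blast
qed

end
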